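(* There is a constant $B_0<\infty$ such that $\sup_{n\in\mathbb N}\left(\sqrt n\,\mathbb E|nM_n-2|\right)\le B_0$.
   Context: Kakutani's interval-splitting process: let $U_1,U_2,\dots$ be i.i.d. uniform random variables on $[0,1]$. At time $0$ the partition of $[0,1]$ consists of the single interval $[0,1]$. Given the partition at time $n\in\mathbb Z_+$ (which consists of $n+1$ intervals, whose lengths are a.s. distinct), let $[a,b]$ be the interval of maximal length; the partition at time $n+1$ is obtained by replacing $[a,b]$ by the two intervals $[a,a+U_{n+1}(b-a)]$ and $[a+U_{n+1}(b-a),b]$. $M_n$ is the maximal interval length at time $n$. *)

theory Defs
  imports "HOL-Probability.Probability"
begin

text \<open>Only the lengths of the intervals
matter for the maximal length; we keep the list of interval lengths.  Going from time n to n+1, the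
interval of maximal length L is replaced by two intervals of lengths U_{n+1} L and
(1 - U_{n+1}) L.  (If several intervals have maximal length -- a null event -- the
resulting multiset of lengths does not depend on which one is split.)
The sequence u :: nat => real represents U_1, U_2, ... as u 1, u 2, ...; u 0 is unused.\<close>

fun kak_lengths :: "(nat \<Rightarrow> real) \<Rightarrow> nat \<Rightarrow> real list" where
  "kak_lengths u 0 = [1]"
| "kak_lengths u (Suc n) =
     (let ls = kak_lengths u n; L = Max (set ls)
      in remove1 L ls @ [u (Suc n) * L, (1 - u (Suc n)) * L])"

definition kak_max :: "nat \<Rightarrow> (nat \<Rightarrow> real) \<Rightarrow> real" where
  "kak_max n u = Max (set (kak_lengths u n))"

definition kak_space :: "(nat \<Rightarrow> real) measure" where
  "kak_space = PiM UNIV (\<lambda>_. uniform_measure lborel {0..1::real})"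

end

theory Submission
  imports Defs "HOL-Analysis.Harmonic_Numbers"
begin

text \<open>Fix a threshold t > 0 and call an interval large if its length is at least t.
  Giving an interval of length L the potential 2L/t - 1 if it is large and 0 otherwise,
  the total potential plus the number of splits of large intervals performed so far is a
  martingale Y, started at 2/t - 1, whose increments are bounded by 2 and vanish once all
  intervals are small.  Hence E Y(n) = 2/t - 1, and the variance of Y(n) is at most
  4 E(number of large splits) \<le> 4 (2/t - 1).  If n M_n - 2 > x, then for t = (2 + x)/n all
  of the first n splits were large, so Y(n) \<ge> n; if n M_n - 2 < -x, then for t = (2 - x)/n
  no interval is large at time n, so Y(n) \<le> n.  Chebyshev's inequality turns both events
  into tail bounds of order (1 + x)/(n x^2), and summing the tails over the grid
  x = j/sqrt n gives E|n M_n - 2| = O(1/sqrt n).\<close>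

lemma nth_remove1:
  "x \<in> set xs \<Longrightarrow> Suc i < length xs \<Longrightarrow>
   remove1 x xs ! i = (if \<exists>j\<le>i. xs ! j = x then xs ! Suc i else xs ! i)"
proof (induction xs arbitrary: i)
  case (Cons y ys)
  show ?case
  proof (cases "y = x")
    case False
    show ?thesis
    proof (cases i)
      case (Suc i')
      have "(\<exists>j\<le>i. (y # ys) ! j = x) \<longleftrightarrow> (\<exists>j\<le>i'. ys ! j = x)"
      proof
        assume "\<exists>j\<le>i. (y # ys) ! j = x"
        then obtain j where "j \<le> i" "(y # ys) ! j = x" by blast
        with False Suc show "\<exists>j\<le>i'. ys ! j = x" by (cases j) auto
      qed (metis Suc Suc_le_mono nth_Cons_Suc)
      with Cons False Suc show ?thesis by auto
    qed (use False in auto)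
  qed auto
qed simp

lemma le_grid_count:
  fixes d z :: real
  assumes d: "0 < d" and z: "0 \<le> z" "z \<le> real N * d"
  shows "z \<le> d * (1 + card {j \<in> {1..N}. real j * d < z})"
proof -
  define m where "m = nat \<lceil>z / d\<rceil> - 1"
  have "real j * d < z" "j \<le> N" if "j \<in> {1..m}" for j
  proof -
    have "int j < \<lceil>z / d\<rceil>"
      using that by (auto simp: m_def)
    then have "real j < z / d"
      by (simp add: less_ceiling_iff)
    then show "real j * d < z"
      using d by (simp add: field_simps)
    then have "real j * d < real N * d"
      using z by linarith
    then have "real j < real N"
      using d by simp
    then show "j \<le> N"
      by simp
  qed
  then have "{1..m} \<subseteq> {j \<in> {1..N}. real j * d < z}"
    by auto
  then have m_le: "m \<le> card {j \<in> {1..N}. real j * d < z}"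
    using card_mono[of "{j \<in> {1..N}. real j * d < z}" "{1..m}"] by simp
  have "z / d \<le> 1 + real m"
    using ceiling_correct[of "z / d"] by (simp add: m_def) linarith
  then have "z \<le> d * (1 + real m)"
    using d by (simp add: field_simps)
  also have "\<dots> \<le> d * (1 + card {j \<in> {1..N}. real j * d < z})"
    using m_le d by (intro mult_left_mono) auto
  finally show ?thesis .
qed

lemma (in prob_space) expectation_abs_le_tail_sum:
  fixes Z :: "'a \<Rightarrow> real"
  assumes [measurable]: "Z \<in> borel_measurable M" and d: "0 < d"
    and bound: "AE x in M. \<bar>Z x\<bar> \<le> real N * d"
  shows "expectation (\<lambda>x. \<bar>Z x\<bar>) \<le> d + d * (\<Sum>j=1..N. prob {x \<in> space M. real j * d < \<bar>Z x\<bar>})"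
proof -
  let ?A = "\<lambda>j. {x \<in> space M. real j * d < \<bar>Z x\<bar>}"
  let ?S = "\<lambda>x. d + d * (\<Sum>j=1..N. indicator (?A j) x) :: real"
  have "integrable M (\<lambda>x. \<bar>Z x\<bar>)"
    using bound by (intro integrable_const_bound[where B="real N * d"]) auto
  moreover have "integrable M (indicator (?A j) :: 'a \<Rightarrow> real)" for j
    by (intro integrable_const_bound[where B=1]) auto
  moreover have "AE x in M. \<bar>Z x\<bar> \<le> ?S x"
    using bound AE_space
  proof eventually_elim
    case (elim x)
    have "(\<Sum>j=1..N. indicator (?A j) x) = real (card {j \<in> {1..N}. real j * d < \<bar>Z x\<bar>})"
      using elim by (simp add: indicator_def sum.If_cases Int_def)
    then show ?case
      using le_grid_count[OF d abs_ge_zero elim(1)] by (simp add: algebra_simps)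
  qed
  ultimately have "expectation (\<lambda>x. \<bar>Z x\<bar>) \<le> expectation ?S"
    by (intro integral_mono_AE) auto
  also have "\<dots> = d + d * (\<Sum>j=1..N. prob (?A j))"
    using \<open>\<And>j. integrable M (indicator (?A j))\<close> by (simp add: prob_space)
  finally show ?thesis .
qed

lemma sum_inverse_squares_le: "1 \<le> N \<Longrightarrow> (\<Sum>j=1..N. 1 / (real j)\<^sup>2) \<le> 2 - 1 / real N"
proof (induction N rule: dec_induct)
  case (step N)
  have "1 / (1 + real N)\<^sup>2 \<le> 1 / (real N * (1 + real N))"
    using step by (intro divide_left_mono) (auto simp: power2_eq_square)
  also have "\<dots> = 1 / real N - 1 / (1 + real N)"
    using step by (simp add: field_simps)
  finally show ?case
    using step.IH by simp
qed simp

lemma harm_le_ln_plus_1: "1 \<le> N \<Longrightarrow> harm N \<le> ln (real N) + (1 :: real)"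
  using euler_mascheroni_sequence_decreasing[of 1 N] by (simp add: harm_def)

lemma ln_le_two_sqrt: "0 < x \<Longrightarrow> ln x \<le> 2 * sqrt x"
  using ln_le_minus_one[of "sqrt x"] by (simp add: ln_sqrt)

lemma length_kak_lengths: "length (kak_lengths u n) = Suc n"
proof (induction n)
  case (Suc n)
  have "Max (set (kak_lengths u n)) \<in> set (kak_lengths u n)"
    using Suc by (intro Max_in) auto
  then show ?case
    using Suc by (simp add: Let_def length_remove1)
qed simp

lemma kak_lengths_fun_upd: "n < m \<Longrightarrow> kak_lengths (u(m := w)) n = kak_lengths u n"
  by (induction n) (auto simp: Let_def)

lemma kak_max_fun_upd: "n < m \<Longrightarrow> kak_max n (u(m := w)) = kak_max n u"
  by (simp add: kak_max_def kak_lengths_fun_upd)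

lemma kak_max_in_kak_lengths: "kak_max n u \<in> set (kak_lengths u n)"
  unfolding kak_max_def
  by (rule Max_in) (auto simp flip: length_0_conv simp: length_kak_lengths)

lemma kak_lengths_le_kak_max: "x \<in> set (kak_lengths u n) \<Longrightarrow> x \<le> kak_max n u"
  unfolding kak_max_def by simp

lemma kak_lengths_Suc:
  "kak_lengths u (Suc n) = remove1 (kak_max n u) (kak_lengths u n) @
     [u (Suc n) * kak_max n u, (1 - u (Suc n)) * kak_max n u]"
  by (simp add: kak_max_def Let_def)

declare kak_lengths.simps(2) [simp del]

definition unit_valued :: "(nat \<Rightarrow> real) \<Rightarrow> bool" where
  "unit_valued u \<longleftrightarrow> (\<forall>k. u k \<in> {0..1})"

lemma kak_lengths_in_unit:
  assumes u: "unit_valued u"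
  shows "x \<in> set (kak_lengths u n) \<Longrightarrow> x \<in> {0..1}"
proof (induction n arbitrary: x)
  case (Suc n)
  have "kak_max n u \<in> {0..1}" "u (Suc n) \<in> {0..1}"
    using Suc.IH[OF kak_max_in_kak_lengths] u by (auto simp: unit_valued_def)
  moreover have "x \<in> set (kak_lengths u n) \<or> x = u (Suc n) * kak_max n u
      \<or> x = (1 - u (Suc n)) * kak_max n u"
    using Suc.prems set_remove1_subset unfolding kak_lengths_Suc by fastforce
  ultimately show ?case
    using Suc.IH by (auto simp: mult_le_one)
qed simp

lemma kak_max_in_unit: "unit_valued u \<Longrightarrow> kak_max n u \<in> {0..1}"
  using kak_lengths_in_unit kak_max_in_kak_lengths by blast

lemma scaled_kak_max_bounds:
  assumes "unit_valued u"
  shows "0 \<le> real n * kak_max n u \<and> real n * kak_max n u \<le> real n"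
  using kak_max_in_unit[OF assms, of n] by (simp add: mult_right_le_one_le)

lemma kak_max_decseq:
  assumes u: "unit_valued u"
  shows "decseq (\<lambda>n. kak_max n u)"
proof (rule decseq_SucI)
  fix n
  let ?M = "kak_max n u"
  have "0 \<le> ?M" "u (Suc n) \<in> {0..1}"
    using kak_max_in_unit[OF u] u by (auto simp: unit_valued_def)
  then have "x \<le> ?M" if "x \<in> set (kak_lengths u (Suc n))" for x
    using that set_remove1_subset[of ?M "kak_lengths u n"]
    by (auto simp: kak_lengths_Suc mult_left_le_one_le dest: kak_lengths_le_kak_max)
  then show "kak_max (Suc n) u \<le> ?M"
    using kak_max_in_kak_lengths by blast
qed

section \<open>The potential\<close>

text \<open>2L/t - 1 is the expected number of splits needed until all pieces of an interval of
  length L \<ge> t are shorter than t.  This renewal identity is why potential_increment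
  integrates to 0 over v.\<close>

definition potential :: "real \<Rightarrow> real \<Rightarrow> real" where
  "potential t L = (if t \<le> L then 2 * L / t - 1 else 0)"

definition potential_increment :: "real \<Rightarrow> real \<Rightarrow> real \<Rightarrow> real" where
  "potential_increment t L v =
     (if t \<le> L then 1 + potential t (v * L) + potential t ((1 - v) * L) - potential t L else 0)"

lemma potential_nonneg: "0 < t \<Longrightarrow> 0 \<le> potential t L"
  by (auto simp: potential_def field_simps)

lemma potential_le: "0 < t \<Longrightarrow> L \<le> 1 \<Longrightarrow> potential t L \<le> 2 / t"
  using divide_right_mono[of "2 * L" 2 t] by (auto simp: potential_def)

lemma potential_affine_error: "0 < t \<Longrightarrow> 0 \<le> L \<Longrightarrow> \<bar>potential t L - (2 * L / t - 1)\<bar> \<le> 1"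
  by (auto simp: potential_def field_simps)

lemma potential_increment_bound:
  assumes t: "0 < t" and v: "v \<in> {0..1}"
  shows "\<bar>potential_increment t L v\<bar> \<le> 2"
proof (cases "t \<le> L")
  case True
  have "0 \<le> v * L" "0 \<le> (1 - v) * L"
    using t True v by auto
  then have "\<bar>potential t (v * L) - (2 * (v * L) / t - 1)\<bar> \<le> 1"
    "\<bar>potential t ((1 - v) * L) - (2 * ((1 - v) * L) / t - 1)\<bar> \<le> 1"
    using potential_affine_error[OF t] by blast+
  moreover have "potential_increment t L v =
      (potential t (v * L) - (2 * (v * L) / t - 1)) +
      (potential t ((1 - v) * L) - (2 * ((1 - v) * L) / t - 1))"
    using True t by (simp add: potential_increment_def potential_def field_simps)
  ultimately show ?thesis by linarith
qed (simp add: potential_increment_def)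

lemma potential_scaled_has_integral:
  assumes t: "0 < t" and tL: "t \<le> L"
  shows "((\<lambda>v. potential t (v * L)) has_integral (L / t - 1)) {0..1}"
proof -
  define a where "a = t / L"
  have L: "0 < L" using t tL by simp
  have a: "0 < a" "a \<le> 1" using t L tL by (auto simp: a_def field_simps)
  have below: "((\<lambda>v. potential t (v * L)) has_integral 0) {0..a}"
  proof (rule has_integral_spike_finite[where S="{a}" and f="\<lambda>_. 0"])
    show "potential t (v * L) = 0" if "v \<in> {0..a} - {a}" for v
      using that L by (auto simp: potential_def a_def field_simps)
  qed auto
  have "((\<lambda>v. 2 * v * L / t - 1) has_integral ((1\<^sup>2 * L / t - 1) - (a\<^sup>2 * L / t - a))) {a..1}"
    using a t
    by (intro fundamental_theorem_of_calculus)
       (auto simp flip: has_real_derivative_iff_has_vector_derivative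
             intro!: derivative_eq_intros simp: field_simps power2_eq_square)
  moreover have "(1\<^sup>2 * L / t - 1) - (a\<^sup>2 * L / t - a) = L / t - 1"
    using t L by (simp add: a_def power2_eq_square field_simps)
  ultimately have "((\<lambda>v. 2 * v * L / t - 1) has_integral (L / t - 1)) {a..1}"
    by simp
  moreover have "potential t (v * L) = 2 * v * L / t - 1" if "v \<in> {a..1}" for v
    using that L by (auto simp: potential_def a_def field_simps)
  ultimately have above: "((\<lambda>v. potential t (v * L)) has_integral (L / t - 1)) {a..1}"
    using has_integral_cong by (metis (no_types, lifting))
  show ?thesis
    using has_integral_combine[OF _ _ below above] a by simp
qed

lemma potential_reflected_has_integral:
  assumes "0 < t" "t \<le> L"
  shows "((\<lambda>v. potential t ((1 - v) * L)) has_integral (L / t - 1)) {0..1}"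
proof -
  have "((\<lambda>v. potential t (v * L)) has_integral (L / t - 1)) (cbox 0 1)"
    using potential_scaled_has_integral[OF assms] by simp
  from has_integral_affinity[OF this, of "-1" 1] show ?thesis
    by (simp add: algebra_simps)
qed

lemma potential_increment_has_integral:
  assumes t: "0 < t"
  shows "(potential_increment t L has_integral 0) {0..1}"
proof (cases "t \<le> L")
  case True
  have "((\<lambda>v. 1 + potential t (v * L) + potential t ((1 - v) * L) - potential t L) has_integral
          (1 + (L / t - 1) + (L / t - 1) - potential t L)) {0..1}"
    using t True
    by (intro has_integral_diff has_integral_add potential_scaled_has_integral
        potential_reflected_has_integral) (auto simp: has_integral_const_real[of _ 0 1, simplified])
  moreover have "1 + (L / t - 1) + (L / t - 1) - potential t L = 0"
    using True t by (simp add: potential_def field_simps)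
  ultimately show ?thesis
    using True unfolding potential_increment_def by simp
qed (simp add: potential_increment_def[abs_def])

abbreviation unif :: "real measure" where
  "unif \<equiv> uniform_measure lborel {0..1}"

lemma prob_space_unif: "prob_space unif"
  by (rule prob_space_uniform_measure) auto

lemma integral_unif_eq_integral:
  fixes f :: "real \<Rightarrow> real"
  assumes [measurable]: "f \<in> borel_measurable borel" and bound: "\<And>x. \<bar>f x\<bar> \<le> B"
  shows "(\<integral>x. f x \<partial>unif) = integral {0..1} f"
proof -
  have "set_integrable lborel {0..1} f"
    unfolding set_integrable_def
    by (rule integrableI_bounded_set[where A="{0..1}" and B=B]) (auto simp: bound indicator_def)
  have "unif = density lborel (\<lambda>x. ennreal (indicator {0..1} x))"
    by (simp add: uniform_measure_def ennreal_indicator divide_ennreal_def)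
  then have "(\<integral>x. f x \<partial>unif) = (LINT x : {0..1} | lborel. f x)"
    by (simp add: integral_density set_lebesgue_integral_def)
  also have "\<dots> = integral {0..1} f"
    using \<open>set_integrable lborel {0..1} f\<close> by (rule set_borel_integral_eq_integral)
  finally show ?thesis .
qed

interpretation kak: prob_space kak_space
  unfolding kak_space_def by (intro prob_space_PiM prob_space_unif)

lemma kak_space_component_measurable [measurable]: "(\<lambda>u. u i) \<in> measurable kak_space unif"
  unfolding kak_space_def by (rule measurable_component_singleton) simp

lemma kak_space_component_borel_measurable [measurable]: "(\<lambda>u. u i) \<in> borel_measurable kak_space"
  using kak_space_component_measurable[of i] by (subst measurable_cong_sets[where N'=unif]) auto

lemma AE_kak_space_unit_valued: "AE u in kak_space. unit_valued u"
proof -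
  have "AE u in kak_space. u k \<in> {0..1}" for k
    unfolding kak_space_def
    by (rule AE_PiM_component) (auto intro: prob_space_unif AE_uniform_measureI)
  then show ?thesis
    by (simp add: unit_valued_def AE_all_countable)
qed

text \<open>The coordinate m is independent of the others: resampling it from unif
  preserves kak_space, and Fubini separates the two integrations.\<close>

lemma kak_space_integral_component:
  fixes H :: "(nat \<Rightarrow> real) \<Rightarrow> real \<Rightarrow> real"
  assumes H_measurable: "(\<lambda>(x, u). H u x) \<in> borel_measurable (unif \<Otimes>\<^sub>M kak_space)"
    and bound: "\<And>u x. \<bar>H u x\<bar> \<le> B"
    and H_fun_upd: "\<And>u x z. H (u(m := z)) x = H u x"
  shows "(\<integral>u. H u (u m) \<partial>kak_space) = (\<integral>u. (\<integral>x. H u x \<partial>unif) \<partial>kak_space)"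
proof -
  interpret pair_prob_space unif kak_space
    by (intro pair_prob_space.intro pair_sigma_finite.intro prob_space_imp_sigma_finite
        prob_space_unif kak.prob_space_axioms)
  have resample_distr: "distr (unif \<Otimes>\<^sub>M kak_space) kak_space (\<lambda>(x, u). u(m := x)) = kak_space"
    using distr_pair_PiM_eq_PiM[of UNIV "\<lambda>_. unif" m] prob_space_unif
    by (simp add: kak_space_def)
  have resample_measurable: "(\<lambda>(x, u). u(m := x)) \<in> measurable (unif \<Otimes>\<^sub>M kak_space) kak_space"
    unfolding kak_space_def split_beta'
    by (rule measurable_fun_upd[where J=UNIV]) (auto simp flip: kak_space_def)
  have "(\<lambda>u. H u (u m)) \<in> borel_measurable kak_space"
    using measurable_comp[OF measurable_Pair[OF kak_space_component_measurable measurable_ident]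
        H_measurable]
    by (simp add: comp_def)
  then have "(\<integral>u. H u (u m) \<partial>kak_space) = (\<integral>p. (\<lambda>(x, u). H u x) p \<partial>(unif \<Otimes>\<^sub>M kak_space))"
    by (subst (1) resample_distr[symmetric], subst integral_distr[OF resample_measurable])
       (auto intro!: Bochner_Integration.integral_cong simp: H_fun_upd split: prod.splits)
  also have "\<dots> = (\<integral>u. (\<integral>x. H u x \<partial>unif) \<partial>kak_space)"
    by (intro integral_snd[symmetric] integrable_const_bound[where B=B] H_measurable)
       (simp add: bound split_beta')
  finally show ?thesis .
qed

text \<open>The i-th interval length at time n, as a real random variable: the list of lengths
  itself does not live in a measurable space.\<close>

definition kak_length :: "nat \<Rightarrow> nat \<Rightarrow> (nat \<Rightarrow> real) \<Rightarrow> real" where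
  "kak_length n i u = (if i \<le> n then kak_lengths u n ! i else 0)"

lemma set_kak_lengths: "set (kak_lengths u n) = (\<lambda>i. kak_length n i u) ` {..n}"
  unfolding kak_length_def using length_kak_lengths[of u n]
  by (auto simp: set_conv_nth image_def less_Suc_eq_le)

lemma kak_max_eq_Max_kak_length: "kak_max n u = (MAX i\<in>{..n}. kak_length n i u)"
  unfolding kak_max_def set_kak_lengths ..

lemma kak_length_Suc: "kak_length (Suc n) i u =
  (if i < n then (if \<exists>j\<le>i. kak_length n j u = kak_max n u
                  then kak_length n (Suc i) u else kak_length n i u)
   else if i = n then u (Suc n) * kak_max n u
   else if i = Suc n then (1 - u (Suc n)) * kak_max n u else 0)"
proof -
  have removed_length: "length (remove1 (kak_max n u) (kak_lengths u n)) = n"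
    using kak_max_in_kak_lengths[of n u] by (simp add: length_remove1 length_kak_lengths)
  show ?thesis
  proof (cases "i < n")
    case True
    then have "(\<exists>j\<le>i. kak_length n j u = kak_max n u) = (\<exists>j\<le>i. kak_lengths u n ! j = kak_max n u)"
      by (auto simp: kak_length_def)
    with True show ?thesis
      using nth_remove1[OF kak_max_in_kak_lengths[of n u], of i] removed_length
      by (auto simp: kak_length_def kak_lengths_Suc nth_append length_kak_lengths)
  qed (use removed_length in \<open>auto simp: kak_length_def kak_lengths_Suc nth_append\<close>)
qed

lemma kak_length_measurable [measurable]: "kak_length n i \<in> borel_measurable kak_space"
proof (induction n arbitrary: i)
  case 0
  show ?case by (cases "i = 0") (simp_all add: kak_length_def)
next
  case (Suc n)
  note Suc.IH [measurable]
  have [measurable]: "kak_max n \<in> borel_measurable kak_space"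
    unfolding kak_max_eq_Max_kak_length by measurable
  have [measurable]: "Measurable.pred kak_space (\<lambda>u. kak_length n j u = kak_max n u)" for j
    unfolding pred_def by (rule measurable_equality_set) measurable
  show ?case
    unfolding kak_length_Suc[abs_def] by measurable
qed

lemma kak_max_measurable [measurable]: "kak_max n \<in> borel_measurable kak_space"
  unfolding kak_max_eq_Max_kak_length by measurable

lemma potential_measurable [measurable]:
  assumes [measurable]: "L \<in> borel_measurable M"
  shows "(\<lambda>x. potential t (L x)) \<in> borel_measurable M"
  unfolding potential_def by measurable

lemma potential_increment_measurable [measurable]:
  assumes [measurable]: "L \<in> borel_measurable M" "v \<in> borel_measurable M"
  shows "(\<lambda>x. potential_increment t (L x) (v x)) \<in> borel_measurable M"
  unfolding potential_increment_def by measurable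

section \<open>The martingale\<close>

definition potential_sum :: "real \<Rightarrow> real list \<Rightarrow> real" where
  "potential_sum t ls = sum_list (map (potential t) ls)"

definition split_count :: "real \<Rightarrow> nat \<Rightarrow> (nat \<Rightarrow> real) \<Rightarrow> real" where
  "split_count t k u = (\<Sum>j<k. if t \<le> kak_max j u then 1 else 0)"

definition kak_martingale :: "real \<Rightarrow> nat \<Rightarrow> (nat \<Rightarrow> real) \<Rightarrow> real" where
  "kak_martingale t k u = split_count t k u + potential_sum t (kak_lengths u k)"

text \<open>Clamping U to [0,1] changes nothing almost surely but makes the increment bounded
  everywhere.\<close>

definition martingale_increment :: "real \<Rightarrow> nat \<Rightarrow> (nat \<Rightarrow> real) \<Rightarrow> real" where
  "martingale_increment t k u = potential_increment t (kak_max k u) (max 0 (min 1 (u (Suc k))))"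

lemma potential_sum_nonneg: "0 < t \<Longrightarrow> 0 \<le> potential_sum t ls"
  unfolding potential_sum_def by (induction ls) (auto simp: potential_nonneg)

lemma potential_sum_kak_lengths:
  "potential_sum t (kak_lengths u n) = (\<Sum>i\<le>n. potential t (kak_length n i u))"
  unfolding potential_sum_def
  by (auto simp: sum_list_sum_nth length_kak_lengths kak_length_def atLeast0LessThan
      lessThan_Suc_atMost intro!: sum.cong)

lemma potential_sum_eq_0:
  assumes "kak_max n u < t"
  shows "potential_sum t (kak_lengths u n) = 0"
proof -
  have "kak_length n i u < t" if "i \<le> n" for i
    using that assms kak_lengths_le_kak_max[of _ u n] by (fastforce simp: set_kak_lengths)
  then show ?thesis
    unfolding potential_sum_kak_lengths by (force intro!: sum.neutral simp: potential_def)
qed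

lemma potential_sum_le:
  assumes "unit_valued u" "0 < t"
  shows "potential_sum t (kak_lengths u k) \<le> (real k + 1) * (2 / t)"
proof -
  have "potential t (kak_length k i u) \<le> 2 / t" if "i \<le> k" for i
    using that assms kak_lengths_in_unit[of u "kak_length k i u" k]
    by (intro potential_le) (auto simp: set_kak_lengths)
  then have "(\<Sum>i\<le>k. potential t (kak_length k i u)) \<le> (\<Sum>i\<le>k. 2 / t)"
    by (intro sum_mono) simp
  then show ?thesis
    by (simp add: potential_sum_kak_lengths algebra_simps)
qed

lemma split_count_bounds: "0 \<le> split_count t k u \<and> split_count t k u \<le> real k"
  unfolding split_count_def
  using sum_mono[of "{..<k}" "\<lambda>j. if t \<le> kak_max j u then 1 else 0" "\<lambda>_. 1::real"]
  by (auto intro: sum_nonneg)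

lemma split_count_Suc:
  "split_count t (Suc k) u = split_count t k u + (if t \<le> kak_max k u then 1 else 0)"
  by (simp add: split_count_def)

lemma split_count_measurable [measurable]: "split_count t k \<in> borel_measurable kak_space"
  unfolding split_count_def[abs_def] by measurable

lemma split_count_full:
  assumes "unit_valued u" "t \<le> kak_max n u"
  shows "split_count t n u = real n"
proof -
  have "t \<le> kak_max j u" if "j < n" for j
    using order_trans[OF assms(2) decseqD[OF kak_max_decseq[OF assms(1)], of j n]] that by simp
  then show ?thesis
    by (simp add: split_count_def)
qed

lemma kak_martingale_Suc:
  assumes u: "unit_valued u"
  shows "kak_martingale t (Suc k) u = kak_martingale t k u + martingale_increment t k u"
proof -
  let ?L = "kak_max k u" and ?v = "u (Suc k)"
  have v: "?v \<in> {0..1}" and L: "0 \<le> ?L"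
    using u kak_max_in_unit[OF u] by (auto simp: unit_valued_def)
  have step: "potential_sum t (kak_lengths u (Suc k)) = potential_sum t (kak_lengths u k)
      - potential t ?L + potential t (?v * ?L) + potential t ((1 - ?v) * ?L)"
    using sum_list_map_remove1[OF kak_max_in_kak_lengths[of k u], of "potential t"]
    by (simp add: kak_lengths_Suc potential_sum_def)
  have "?v * ?L \<le> ?L" "(1 - ?v) * ?L \<le> ?L"
    using v L by (auto simp: mult_left_le_one_le)
  then show ?thesis
    using v step
    by (auto simp: kak_martingale_def split_count_def martingale_increment_def
        potential_increment_def potential_def)
qed

lemma kak_martingale_fun_upd: "k < m \<Longrightarrow> kak_martingale t k (u(m := z)) = kak_martingale t k u"
  by (simp add: kak_martingale_def split_count_def kak_max_fun_upd kak_lengths_fun_upd)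

lemma kak_martingale_measurable [measurable]: "kak_martingale t k \<in> borel_measurable kak_space"
  unfolding kak_martingale_def[abs_def] split_count_def potential_sum_kak_lengths by measurable

lemma martingale_increment_measurable [measurable]:
  "martingale_increment t k \<in> borel_measurable kak_space"
  unfolding martingale_increment_def[abs_def] by measurable

lemma abs_kak_martingale_le:
  "unit_valued u \<Longrightarrow> 0 < t \<Longrightarrow> \<bar>kak_martingale t k u\<bar> \<le> real k + (real k + 1) * (2 / t)"
  using split_count_bounds[of t k u] potential_sum_le[of u t k] potential_sum_nonneg[of t]
  unfolding kak_martingale_def by (smt (verit))

lemma abs_martingale_increment_le: "0 < t \<Longrightarrow> \<bar>martingale_increment t k u\<bar> \<le> 2"
  unfolding martingale_increment_def by (rule potential_increment_bound) auto

lemma martingale_increment_square_le: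
  assumes "0 < t"
  shows "(martingale_increment t k u)\<^sup>2 \<le> 4 * (if t \<le> kak_max k u then 1 else 0)"
proof -
  have "(martingale_increment t k u)\<^sup>2 \<le> 2\<^sup>2"
    using abs_martingale_increment_le[OF assms] by (metis abs_ge_zero power2_abs power_mono)
  then show ?thesis
    by (auto simp: martingale_increment_def potential_increment_def)
qed

lemma integral_mult_martingale_increment:
  fixes F :: "(nat \<Rightarrow> real) \<Rightarrow> real"
  assumes t: "0 < t" and [measurable]: "F \<in> borel_measurable kak_space"
    and F_bound: "\<And>u. \<bar>F u\<bar> \<le> B" and F_fun_upd: "\<And>u z. F (u(Suc k := z)) = F u"
  shows "(\<integral>u. F u * martingale_increment t k u \<partial>kak_space) = 0"
proof -
  let ?H = "\<lambda>u x. F u * potential_increment t (kak_max k u) (max 0 (min 1 x))"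
  have inner: "(\<integral>x. potential_increment t L (max 0 (min 1 x)) \<partial>unif) = 0" for L
  proof -
    have "(\<integral>x. potential_increment t L (max 0 (min 1 x)) \<partial>unif)
        = integral {0..1} (\<lambda>x. potential_increment t L (max 0 (min 1 x)))"
      using t by (intro integral_unif_eq_integral[where B=2] potential_increment_bound) auto
    also have "\<dots> = integral {0..1} (potential_increment t L)"
      by (intro integral_cong) auto
    finally show ?thesis
      using potential_increment_has_integral[OF t] by (simp add: integral_unique)
  qed
  have "(\<integral>u. F u * martingale_increment t k u \<partial>kak_space) = (\<integral>u. (\<integral>x. ?H u x \<partial>unif) \<partial>kak_space)"
    unfolding martingale_increment_def
  proof (rule kak_space_integral_component[where B="B * 2"])
    show "(\<lambda>(x, u). ?H u x) \<in> borel_measurable (unif \<Otimes>\<^sub>M kak_space)"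
      unfolding split_beta' by measurable
    show "\<bar>?H u x\<bar> \<le> B * 2" for u x
      unfolding abs_mult using F_bound[of u] t
      by (intro mult_mono potential_increment_bound) auto
    show "?H (u(Suc k := z)) x = ?H u x" for u x z
      by (simp add: F_fun_upd kak_max_fun_upd)
  qed
  then show ?thesis
    by (simp add: inner)
qed

lemma AE_kak_martingale_Suc:
  "AE u in kak_space. kak_martingale t (Suc k) u = kak_martingale t k u + martingale_increment t k u"
  using AE_kak_space_unit_valued by eventually_elim (rule kak_martingale_Suc)

lemma integrable_kak_martingale:
  assumes t: "0 < t"
  shows "integrable kak_space (kak_martingale t k)"
proof (rule kak.integrable_const_bound)
  show "AE u in kak_space. norm (kak_martingale t k u) \<le> real k + (real k + 1) * (2 / t)"
    using AE_kak_space_unit_valued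
    by eventually_elim (unfold real_norm_def, rule abs_kak_martingale_le[OF _ t])
qed measurable

lemma abs_kak_martingale_deviation_le:
  assumes "unit_valued u" "0 < t"
  shows "\<bar>kak_martingale t k u - potential t 1\<bar> \<le> real k + (real k + 1) * (2 / t) + \<bar>potential t 1\<bar>"
  using abs_kak_martingale_le[OF assms, of k] abs_triangle_ineq4[of "kak_martingale t k u" "potential t 1"]
  by linarith

lemma integrable_kak_martingale_deviation_square:
  assumes t: "0 < t"
  shows "integrable kak_space (\<lambda>u. (kak_martingale t k u - potential t 1)\<^sup>2)"
proof (rule kak.integrable_const_bound)
  show "AE u in kak_space. norm ((kak_martingale t k u - potential t 1)\<^sup>2)
      \<le> (real k + (real k + 1) * (2 / t) + \<bar>potential t 1\<bar>)\<^sup>2"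
    using AE_kak_space_unit_valued
  proof eventually_elim
    case (elim u)
    show ?case
      using power_mono[OF abs_kak_martingale_deviation_le[OF elim t, of k] abs_ge_zero, of 2] by simp
  qed
qed measurable

lemma integrable_martingale_increment: "0 < t \<Longrightarrow> integrable kak_space (martingale_increment t k)"
  by (intro kak.integrable_const_bound[where B=2]) (auto simp: abs_martingale_increment_le)

lemma integrable_split_count: "integrable kak_space (split_count t k)"
  using split_count_bounds by (intro kak.integrable_const_bound[where B="real k"]) auto

lemma expectation_kak_martingale:
  assumes t: "0 < t"
  shows "kak.expectation (kak_martingale t n) = potential t 1"
proof (induction n)
  case 0
  then show ?case
    by (simp add: kak_martingale_def split_count_def potential_sum_def kak.prob_space)
next
  case (Suc k)
  have "kak.expectation (kak_martingale t (Suc k))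
      = kak.expectation (\<lambda>u. kak_martingale t k u + martingale_increment t k u)"
    by (intro integral_cong_AE AE_kak_martingale_Suc) measurable
  also have "\<dots> = kak.expectation (kak_martingale t k) + kak.expectation (\<lambda>u. 1 * martingale_increment t k u)"
    using t by (simp add: integrable_kak_martingale integrable_martingale_increment)
  also have "kak.expectation (\<lambda>u. 1 * martingale_increment t k u) = 0"
    using t by (intro integral_mult_martingale_increment[where B=1]) auto
  finally show ?case
    using Suc by simp
qed

text \<open>The increments are orthogonal to bounded functions of the past, so the second moment
  grows by at most E[D_k^2] \<le> 4 P(t \<le> M_k) per step.  The martingale is only almost surely
  bounded, hence the truncation at K.\<close>

lemma second_moment_kak_martingale:
  assumes t: "0 < t"
  shows "kak.expectation (\<lambda>u. (kak_martingale t n u - potential t 1)\<^sup>2)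
    \<le> 4 * kak.expectation (split_count t n)"
proof (induction n)
  case 0
  then show ?case
    by (simp add: kak_martingale_def split_count_def potential_sum_def)
next
  case (Suc k)
  define K where "K = real k + (real k + 1) * (2 / t) + \<bar>potential t 1\<bar>"
  let ?W = "\<lambda>u. kak_martingale t k u - potential t 1"
  let ?C = "\<lambda>u. max (- K) (min K (?W u))"
  let ?D = "martingale_increment t k"
  let ?I = "\<lambda>u. if t \<le> kak_max k u then 1 else 0 :: real"
  have "0 \<le> K"
    using t by (simp add: K_def)
  have W_bound: "AE u in kak_space. \<bar>?W u\<bar> \<le> K"
    using AE_kak_space_unit_valued
    by eventually_elim (unfold K_def, rule abs_kak_martingale_deviation_le[OF _ t])
  have expand: "AE u in kak_space.
      (kak_martingale t (Suc k) u - potential t 1)\<^sup>2 = (?W u)\<^sup>2 + 2 * (?C u * ?D u) + (?D u)\<^sup>2"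
    using W_bound AE_kak_martingale_Suc[of t k]
    by eventually_elim (auto simp: power2_eq_square algebra_simps abs_le_iff)
  note integrable_W = integrable_kak_martingale_deviation_square[OF t, of k]
  have integrable_CD: "integrable kak_space (\<lambda>u. 2 * (?C u * ?D u))"
    using \<open>0 \<le> K\<close> abs_martingale_increment_le[OF t]
    by (intro kak.integrable_const_bound[where B="2 * (K * 2)"])
       (auto simp: abs_mult intro!: mult_mono)
  have "(?D u)\<^sup>2 \<le> 4" for u
    using martingale_increment_square_le[OF t, of k u] by (simp split: if_splits)
  then have integrable_D: "integrable kak_space (\<lambda>u. (?D u)\<^sup>2)"
    by (intro kak.integrable_const_bound[where B=4]) auto
  have integrable_I: "integrable kak_space ?I"
    by (intro kak.integrable_const_bound[where B=1]) auto
  have cross: "kak.expectation (\<lambda>u. ?C u * ?D u) = 0"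
    using \<open>0 \<le> K\<close>
    by (intro integral_mult_martingale_increment[OF t, where B=K]) (auto simp: kak_martingale_fun_upd)
  have "kak.expectation (\<lambda>u. (kak_martingale t (Suc k) u - potential t 1)\<^sup>2)
      = kak.expectation (\<lambda>u. (?W u)\<^sup>2 + 2 * (?C u * ?D u) + (?D u)\<^sup>2)"
    by (intro integral_cong_AE expand) measurable
  also have "\<dots> = kak.expectation (\<lambda>u. (?W u)\<^sup>2) + kak.expectation (\<lambda>u. (?D u)\<^sup>2)"
    using integrable_W integrable_CD integrable_D cross by simp
  also have "\<dots> \<le> 4 * kak.expectation (split_count t k) + kak.expectation (\<lambda>u. 4 * ?I u)"
    using Suc martingale_increment_square_le[OF t] integrable_D integrable_I
    by (intro add_mono integral_mono) auto
  also have "\<dots> = 4 * kak.expectation (split_count t (Suc k))"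
    using integrable_split_count integrable_I
    by (simp add: split_count_Suc[abs_def])
  finally show ?case .
qed

lemma expectation_split_count_le:
  assumes t: "0 < t"
  shows "kak.expectation (split_count t n) \<le> potential t 1"
proof -
  have "kak.expectation (split_count t n) \<le> kak.expectation (kak_martingale t n)"
    using t potential_sum_nonneg[OF t]
    by (intro integral_mono integrable_split_count integrable_kak_martingale)
       (auto simp: kak_martingale_def)
  then show ?thesis
    using expectation_kak_martingale[OF t] by simp
qed

lemma prob_kak_martingale_deviation:
  assumes t: "0 < t" and c: "0 < c"
  shows "kak.prob {u \<in> space kak_space. c \<le> \<bar>kak_martingale t n u - potential t 1\<bar>}
    \<le> 4 * potential t 1 / c\<^sup>2"
proof -
  have "kak.prob {u \<in> space kak_space. c \<le> \<bar>kak_martingale t n u - potential t 1\<bar>}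
      \<le> kak.expectation (\<lambda>u. (kak_martingale t n u - potential t 1)\<^sup>2) / c\<^sup>2"
    using c integrable_kak_martingale_deviation_square[OF t]
    by (intro kak.second_moment_method) auto
  also have "\<dots> \<le> 4 * potential t 1 / c\<^sup>2"
    using second_moment_kak_martingale[OF t, of n] expectation_split_count_le[OF t, of n]
    by (intro divide_right_mono) auto
  finally show ?thesis .
qed

section \<open>Tail bounds\<close>

lemma prob_le_by_kak_martingale_deviation:
  assumes t: "0 < t" and c: "0 < c" and [measurable]: "Measurable.pred kak_space P"
    and deviation: "\<And>u. unit_valued u \<Longrightarrow> P u \<Longrightarrow> c \<le> \<bar>kak_martingale t n u - potential t 1\<bar>"
  shows "kak.prob {u \<in> space kak_space. P u} \<le> 4 * potential t 1 / c\<^sup>2"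
proof -
  have "kak.prob {u \<in> space kak_space. P u}
      \<le> kak.prob {u \<in> space kak_space. c \<le> \<bar>kak_martingale t n u - potential t 1\<bar>}"
    using AE_kak_space_unit_valued by (intro kak.finite_measure_mono_AE) (auto simp: deviation)
  also have "\<dots> \<le> 4 * potential t 1 / c\<^sup>2"
    by (rule prob_kak_martingale_deviation[OF t c])
  finally show ?thesis .
qed

lemma prob_eq_0_if_unit_valued_excludes:
  assumes "\<And>u. unit_valued u \<Longrightarrow> \<not> P u"
  shows "kak.prob {u \<in> space kak_space. P u} = 0"
proof -
  have "AE u in kak_space. \<not> P u"
    using AE_kak_space_unit_valued by (auto elim: eventually_mono simp: assms)
  then have "kak.prob {u \<in> space kak_space. P u} \<le> kak.prob {}"
    by (intro kak.finite_measure_mono_AE) (auto elim: eventually_mono)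
  then show ?thesis
    by (simp add: measure_le_0_iff)
qed

lemma prob_kak_max_upper_tail:
  assumes n: "1 \<le> n" and x: "0 < x"
  shows "kak.prob {u \<in> space kak_space. x < real n * kak_max n u - 2} \<le> 8 * (2 + x) / (real n * x\<^sup>2)"
proof (cases "real n < 2 + x")
  case True
  have "\<not> x < real n * kak_max n u - 2" if "unit_valued u" for u
    using True scaled_kak_max_bounds[OF that, of n] by linarith
  then show ?thesis
    using x by (simp add: prob_eq_0_if_unit_valued_excludes)
next
  case False
  define s where "s = 2 + x"
  define t where "t = s / real n"
  define c where "c = real n * x / s"
  have s: "0 < s" and t: "0 < t" "t \<le> 1" and c: "0 < c"
    using n x False by (auto simp: s_def t_def c_def)
  have "kak.prob {u \<in> space kak_space. x < real n * kak_max n u - 2} \<le> 4 * potential t 1 / c\<^sup>2"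
  proof (rule prob_le_by_kak_martingale_deviation[OF t(1) c])
    fix u assume u: "unit_valued u" and "x < real n * kak_max n u - 2"
    then have "t \<le> kak_max n u"
      using n by (simp add: s_def t_def field_simps)
    then have "real n \<le> kak_martingale t n u"
      using potential_sum_nonneg[OF t(1)] split_count_full[OF u] by (simp add: kak_martingale_def)
    moreover have "real n - potential t 1 \<ge> c"
      using t x n by (simp add: potential_def s_def t_def c_def field_simps)
    ultimately show "c \<le> \<bar>kak_martingale t n u - potential t 1\<bar>"
      by simp
  qed measurable
  also have "\<dots> \<le> 4 * (2 / t) / c\<^sup>2"
    using t by (intro divide_right_mono mult_left_mono potential_le) auto
  also have "\<dots> = 8 * s / (real n * x\<^sup>2)"
    using n x s by (simp add: t_def c_def field_simps power2_eq_square)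
  finally show ?thesis
    by (simp add: s_def)
qed

lemma prob_kak_max_lower_tail:
  assumes n: "2 \<le> n" and x: "0 < x"
  shows "kak.prob {u \<in> space kak_space. real n * kak_max n u - 2 < - x} \<le> 64 / (real n * x\<^sup>2)"
proof (cases "x < 2 \<and> 4 \<le> real n * x")
  case False
  show ?thesis
  proof (cases "2 \<le> x")
    case True
    have "\<not> real n * kak_max n u - 2 < - x" if "unit_valued u" for u
      using True scaled_kak_max_bounds[OF that, of n] by linarith
    then show ?thesis
      using x by (simp add: prob_eq_0_if_unit_valued_excludes)
  next
    case small: False
    with False have "real n * x\<^sup>2 \<le> 64"
      using mult_mono[of "real n * x" 4 x 2] x by (simp add: power2_eq_square mult.assoc)
    then have "1 \<le> 64 / (real n * x\<^sup>2)"
      using n x by simp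
    then show ?thesis
      using kak.prob_le_1 order_trans by blast
  qed
next
  case True
  define s where "s = 2 - x"
  define t where "t = s / real n"
  define c where "c = real n * x / (2 * s)"
  have s: "0 < s" "s \<le> 2" and t: "0 < t" "t \<le> 1" and c: "0 < c"
    using n x True by (auto simp: s_def t_def c_def)
  have "kak.prob {u \<in> space kak_space. real n * kak_max n u - 2 < - x} \<le> 4 * potential t 1 / c\<^sup>2"
  proof (rule prob_le_by_kak_martingale_deviation[OF t(1) c])
    fix u assume "real n * kak_max n u - 2 < - x"
    then have "kak_max n u < t"
      using n by (simp add: s_def t_def field_simps)
    then have "kak_martingale t n u \<le> real n"
      using potential_sum_eq_0 split_count_bounds by (simp add: kak_martingale_def)
    moreover have "potential t 1 - real n = real n * x / s - 1"
      using t s by (simp add: potential_def t_def s_def field_simps)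
    moreover have "1 \<le> c"
      using True s by (simp add: c_def s_def field_simps)
    then have "c \<le> real n * x / s - 1"
      using s by (simp add: c_def field_simps)
    ultimately show "c \<le> \<bar>kak_martingale t n u - potential t 1\<bar>"
      by (smt (verit))
  qed measurable
  also have "\<dots> \<le> 4 * (2 / t) / c\<^sup>2"
    using t by (intro divide_right_mono mult_left_mono potential_le) auto
  also have "\<dots> = 32 * s / (real n * x\<^sup>2)"
    using n x s by (simp add: t_def c_def field_simps power2_eq_square)
  also have "\<dots> \<le> 64 / (real n * x\<^sup>2)"
    using n x s by (intro divide_right_mono) auto
  finally show ?thesis .
qed

section \<open>The mean absolute deviation\<close>

lemma abs_scaled_kak_max_deviation_le:
  "unit_valued u \<Longrightarrow> \<bar>real n * kak_max n u - 2\<bar> \<le> max 2 (real n)"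
  using scaled_kak_max_bounds[of u n] by (auto simp: abs_le_iff)

lemma integrable_abs_scaled_kak_max_deviation:
  "integrable kak_space (\<lambda>u. \<bar>real n * kak_max n u - 2\<bar>)"
  using AE_kak_space_unit_valued
  by (intro kak.integrable_const_bound[where B="max 2 (real n)"])
     (auto elim!: eventually_mono simp: abs_scaled_kak_max_deviation_le)

lemma prob_abs_scaled_kak_max_deviation:
  assumes n: "2 \<le> n" and j: "1 \<le> j"
  shows "kak.prob {u \<in> space kak_space. real j / sqrt (real n) < \<bar>real n * kak_max n u - 2\<bar>}
    \<le> 80 / (real j)\<^sup>2 + 8 / (sqrt (real n) * real j)"
proof -
  define x where "x = real j / sqrt (real n)"
  have x: "0 < x" and nx: "real n * x\<^sup>2 = (real j)\<^sup>2"
    using n j by (auto simp: x_def power_divide)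
  have "{u \<in> space kak_space. x < \<bar>real n * kak_max n u - 2\<bar>}
      \<subseteq> {u \<in> space kak_space. x < real n * kak_max n u - 2} \<union>
         {u \<in> space kak_space. real n * kak_max n u - 2 < - x}"
    by auto
  then have "kak.prob {u \<in> space kak_space. x < \<bar>real n * kak_max n u - 2\<bar>}
      \<le> kak.prob ({u \<in> space kak_space. x < real n * kak_max n u - 2} \<union>
                  {u \<in> space kak_space. real n * kak_max n u - 2 < - x})"
    by (rule kak.finite_measure_mono) measurable
  also have "\<dots> \<le> kak.prob {u \<in> space kak_space. x < real n * kak_max n u - 2} +
                  kak.prob {u \<in> space kak_space. real n * kak_max n u - 2 < - x}"
    by (rule measure_Un_le) measurable
  also have "\<dots> \<le> 8 * (2 + x) / (real n * x\<^sup>2) + 64 / (real n * x\<^sup>2)"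
    using n x by (intro add_mono prob_kak_max_upper_tail prob_kak_max_lower_tail) auto
  also have "\<dots> = 80 / (real j)\<^sup>2 + 8 * x / (real j)\<^sup>2"
    using j unfolding nx by (simp add: field_simps)
  also have "8 * x / (real j)\<^sup>2 = 8 / (sqrt (real n) * real j)"
    using j by (simp add: x_def power2_eq_square)
  finally show ?thesis
    by (simp add: x_def)
qed

lemma sqrt_mult_expectation_abs_scaled_kak_max_deviation_le:
  assumes n: "2 \<le> n"
  shows "sqrt (real n) * kak.expectation (\<lambda>u. \<bar>real n * kak_max n u - 2\<bar>) \<le> 201"
proof -
  define d where "d = 1 / sqrt (real n)"
  define N where "N = n\<^sup>2"
  have d: "0 < d" "d \<le> 1" "sqrt (real n) * d = 1"
    using n by (auto simp: d_def)
  have "real N * d = real n * (real n / sqrt (real n))"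
    by (simp add: N_def d_def power2_eq_square)
  also have "real n / sqrt (real n) = sqrt (real n)"
    by (rule real_div_sqrt) simp
  finally have "real N * d = real n * sqrt (real n)" .
  then have N: "1 \<le> N" "real n \<le> real N * d"
    using n by (auto simp: N_def)
  have "kak.expectation (\<lambda>u. \<bar>real n * kak_max n u - 2\<bar>)
      \<le> d + d * (\<Sum>j=1..N. kak.prob {u \<in> space kak_space. real j * d < \<bar>real n * kak_max n u - 2\<bar>})"
  proof (rule kak.expectation_abs_le_tail_sum[OF _ d(1)])
    have bound: "max 2 (real n) \<le> real N * d"
      using N n by simp
    show "AE u in kak_space. \<bar>real n * kak_max n u - 2\<bar> \<le> real N * d"
      using AE_kak_space_unit_valued
      by eventually_elim (rule order_trans[OF abs_scaled_kak_max_deviation_le bound])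
  qed measurable
  also have "\<dots> \<le> d + d * (\<Sum>j=1..N. 80 * (1 / (real j)\<^sup>2) + 8 * d * (1 / real j))"
    using d n prob_abs_scaled_kak_max_deviation[OF n]
    by (intro add_left_mono mult_left_mono sum_mono) (auto simp: d_def field_simps)
  also have "\<dots> = d + d * (80 * (\<Sum>j=1..N. 1 / (real j)\<^sup>2) + 8 * d * harm N)"
    by (simp add: sum.distrib sum_distrib_left harm_def divide_inverse)
  also have "\<dots> \<le> d + d * (80 * 2 + 8 * d * (4 * sqrt (real n) + 1))"
  proof -
    have "harm N \<le> 2 * ln (real n) + 1"
      using harm_le_ln_plus_1[OF N(1)] n by (simp add: N_def ln_realpow)
    also have "\<dots> \<le> 4 * sqrt (real n) + 1"
      using ln_le_two_sqrt[of "real n"] n by simp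
    finally show ?thesis
      using d order_trans[OF sum_inverse_squares_le[OF N(1)], of 2]
      by (intro add_left_mono mult_left_mono add_mono) auto
  qed
  finally have "sqrt (real n) * kak.expectation (\<lambda>u. \<bar>real n * kak_max n u - 2\<bar>)
      \<le> sqrt (real n) * (d + d * (80 * 2 + 8 * d * (4 * sqrt (real n) + 1)))"
    by (rule mult_left_mono) simp
  also have "\<dots> = sqrt (real n) * d * (1 + 160 + 32 * (sqrt (real n) * d) + 8 * d)"
    by (simp add: algebra_simps)
  also have "\<dots> \<le> 201"
    using d by simp
  finally show ?thesis .
qed

theorem lemma2p4:
  shows "\<exists>B0::real. \<forall>n::nat.
           sqrt (real n) * (\<integral>u. \<bar>real n * kak_max n u - 2\<bar> \<partial>kak_space) \<le> B0"
proof (intro exI allI)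
  fix n :: nat
  show "sqrt (real n) * (\<integral>u. \<bar>real n * kak_max n u - 2\<bar> \<partial>kak_space) \<le> 201"
  proof (cases "2 \<le> n")
    case False
    then have "kak.expectation (\<lambda>u. \<bar>real n * kak_max n u - 2\<bar>) \<le> 2"
      using AE_kak_space_unit_valued abs_scaled_kak_max_deviation_le[of _ n]
      by (intro kak.integral_le_const integrable_abs_scaled_kak_max_deviation)
         (auto elim!: eventually_mono)
    moreover have "sqrt (real n) \<le> 1"
      using False by simp
    moreover have "0 \<le> kak.expectation (\<lambda>u. \<bar>real n * kak_max n u - 2\<bar>)"
      by simp
    ultimately have "sqrt (real n) * kak.expectation (\<lambda>u. \<bar>real n * kak_max n u - 2\<bar>) \<le> 1 * 2"
      by (intro mult_mono) auto
    then show ?thesis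
      by simp
  qed (rule sqrt_mult_expectation_abs_scaled_kak_max_deviation_le)
qed

end
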